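(* Let $\mu$ be a non-atomic probability distribution on $[0,1]$ and $r:[0,1]\to\mathbb{R}$ a right-continuous function of bounded variation. Define $b^{(0)}=0$ and, for $k\ge1$, $$u^{(k)}=\arg\min_{u\in\mathcal{C}^+}\|r-b^{(k-1)}-u\|,\qquad b^{(k)}=\arg\min_{b\in\mathcal{C}^-}\|r-u^{(k)}-b\|,\qquad r^{(k)}=u^{(k)}+b^{(k)}.$$ Then $\lim_{k\to\infty}\|r^{(k)}-r\|=0$.
   Context: $\|g\|^2=\int_{[0,1]}g(x)^2\mu(dx)$ is the norm of $L_2(\mu)$; $\mathcal{C}^+$ is the closed convex cone of non-decreasing functions in $L_2(\mu)$ and $\mathcal{C}^-=-\mathcal{C}^+$ the cone of non-increasing functions; the minimizers are the (unique) metric projections onto these cones. *)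

theory Defs
  imports "HOL-Probability.Probability"
begin

definition bounded_variation_on :: "(real \<Rightarrow> real) \<Rightarrow> real \<Rightarrow> real \<Rightarrow> bool" where
  "bounded_variation_on f a b \<longleftrightarrow>
     (\<exists>B. \<forall>(n::nat) (t::nat \<Rightarrow> real).
        (\<forall>i\<le>n. t i \<in> {a..b}) \<and> (\<forall>i<n. t i \<le> t (Suc i)) \<longrightarrow>
        (\<Sum>i<n. \<bar>f (t (Suc i)) - f (t i)\<bar>) \<le> B)"

definition L2 :: "real measure \<Rightarrow> (real \<Rightarrow> real) \<Rightarrow> bool" where
  "L2 M g \<longleftrightarrow> g \<in> borel_measurable M \<and> integrable M (\<lambda>x. (g x)\<^sup>2)"

definition L2norm :: "real measure \<Rightarrow> (real \<Rightarrow> real) \<Rightarrow> real" where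
  "L2norm M g = sqrt (\<integral>x. (g x)\<^sup>2 \<partial>M)"

definition Cplus :: "real measure \<Rightarrow> (real \<Rightarrow> real) set" where
  "Cplus M = {u. L2 M u \<and> (\<exists>v. mono_on {0..1} v \<and> (AE x in M. u x = v x))}"

definition Cminus :: "real measure \<Rightarrow> (real \<Rightarrow> real) set" where
  "Cminus M = {b. (\<lambda>x. - b x) \<in> Cplus M}"

end

theory Submission
  imports Defs
begin

text \<open>The variation function v(x) of r on [0,x] is non-decreasing and so is v - r, so
  r = v + (r - v) lies in C+ + C-. For alternating projections onto two convex sets whose sum
  contains the target, the Pythagorean inequality for both projections of a round shows that
  \<integral>(b_k - (r - v))^2 drops at least by the squared residual \<integral>(r - r_k)^2; as it is
  non-negative, these drops, and hence the residuals, tend to zero.\<close>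

lemma L2_integrable_mult:
  assumes "L2 M f" "L2 M g"
  shows "integrable M (\<lambda>x. f x * g x)"
proof (rule Bochner_Integration.integrable_bound[where f="\<lambda>x. (f x)\<^sup>2 + (g x)\<^sup>2"])
  show "integrable M (\<lambda>x. (f x)\<^sup>2 + (g x)\<^sup>2)" "(\<lambda>x. f x * g x) \<in> borel_measurable M"
    using assms unfolding L2_def by auto
  have "\<bar>f x * g x\<bar> \<le> (f x)\<^sup>2 + (g x)\<^sup>2" for x
  proof -
    have "2 * (\<bar>f x\<bar> * \<bar>g x\<bar>) \<le> (f x)\<^sup>2 + (g x)\<^sup>2"
      using sum_squares_bound[of "\<bar>f x\<bar>" "\<bar>g x\<bar>"] by simp
    moreover have "0 \<le> \<bar>f x\<bar> * \<bar>g x\<bar>" by simp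
    ultimately show ?thesis unfolding abs_mult by linarith
  qed
  then show "AE x in M. norm (f x * g x) \<le> norm ((f x)\<^sup>2 + (g x)\<^sup>2)"
    by simp
qed

lemma L2_lincomb:
  assumes "L2 M f" "L2 M g"
  shows "L2 M (\<lambda>x. a * f x + c * g x)"
proof -
  have "integrable M (\<lambda>x. a\<^sup>2 * (f x)\<^sup>2 + (2*a*c) * (f x * g x) + c\<^sup>2 * (g x)\<^sup>2)"
    using assms L2_integrable_mult[OF assms] unfolding L2_def by auto
  moreover have "(\<lambda>x. a\<^sup>2 * (f x)\<^sup>2 + (2*a*c) * (f x * g x) + c\<^sup>2 * (g x)\<^sup>2) = (\<lambda>x. (a * f x + c * g x)\<^sup>2)"
    by (simp add: power2_eq_square algebra_simps)
  ultimately show ?thesis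
    using assms unfolding L2_def by auto
qed

lemma L2_diff: "L2 M f \<Longrightarrow> L2 M g \<Longrightarrow> L2 M (\<lambda>x. f x - g x)"
  using L2_lincomb[of M f g 1 "-1"] by simp

lemma L2_minus: "L2 M f \<Longrightarrow> L2 M (\<lambda>x. - f x)"
  using L2_lincomb[of M f f "-1" 0] by simp

lemma L2_cong:
  assumes "\<And>x. x \<in> space M \<Longrightarrow> f x = g x" "L2 M f"
  shows "L2 M g"
  using assms measurable_cong[of M f g]
    Bochner_Integration.integrable_cong[of M M "\<lambda>x. (f x)\<^sup>2" "\<lambda>x. (g x)\<^sup>2"]
  unfolding L2_def by auto

lemma L2_mono_on:
  assumes "finite_measure M" "sets M = sets (restrict_space borel {a..b})" "mono_on {a..b} g"
  shows "L2 M g"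
proof -
  have space: "space M = {a..b}"
    using sets_eq_imp_space_eq[OF assms(2)] by simp
  have meas: "g \<in> borel_measurable M"
    using borel_measurable_mono_on_fnc[OF assms(3)] measurable_cong_sets[OF assms(2) refl] by blast
  have "\<bar>g x\<bar> \<le> \<bar>g a\<bar> + \<bar>g b\<bar>" if "x \<in> {a..b}" for x
    using mono_onD[OF assms(3), of a x] mono_onD[OF assms(3), of x b] that by auto
  then have "norm ((g x)\<^sup>2) \<le> (\<bar>g a\<bar> + \<bar>g b\<bar>)\<^sup>2" if "x \<in> space M" for x
    using that space power_mono[of "\<bar>g x\<bar>" "\<bar>g a\<bar> + \<bar>g b\<bar>" 2] by simp
  then have "integrable M (\<lambda>x. (g x)\<^sup>2)"
    using meas by (intro finite_measure.integrable_const_bound[OF assms(1)] AE_I2) auto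
  then show ?thesis
    using meas unfolding L2_def by simp
qed

lemma integral_square_diff_scaled:
  assumes "L2 M f" "L2 M g"
  shows "(\<integral>x. (f x - t * g x)\<^sup>2 \<partial>M)
    = (\<integral>x. (f x)\<^sup>2 \<partial>M) - 2 * t * (\<integral>x. f x * g x \<partial>M) + t\<^sup>2 * (\<integral>x. (g x)\<^sup>2 \<partial>M)"
proof -
  have "(\<integral>x. (f x - t * g x)\<^sup>2 \<partial>M) = (\<integral>x. (f x)\<^sup>2 - (2 * t) * (f x * g x) + t\<^sup>2 * (g x)\<^sup>2 \<partial>M)"
    by (rule Bochner_Integration.integral_cong) (auto simp: power2_eq_square algebra_simps)
  also have "\<dots> = (\<integral>x. (f x)\<^sup>2 \<partial>M) - 2 * t * (\<integral>x. f x * g x \<partial>M) + t\<^sup>2 * (\<integral>x. (g x)\<^sup>2 \<partial>M)"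
    using assms L2_integrable_mult[OF assms] unfolding L2_def by simp
  finally show ?thesis .
qed

lemma nonpos_if_quadratic_bound:
  fixes I N :: real
  assumes "0 \<le> N" and bound: "\<And>t. 0 < t \<Longrightarrow> t \<le> 1 \<Longrightarrow> 2 * t * I \<le> t\<^sup>2 * N"
  shows "I \<le> 0"
proof (rule ccontr)
  assume "\<not> I \<le> 0"
  define t where "t = min 1 (I / (N + 1))"
  have t: "0 < t" "t \<le> 1" "t * N < I"
    using \<open>\<not> I \<le> 0\<close> \<open>0 \<le> N\<close> by (auto simp: t_def min_def field_simps)
  have "t * (2 * I) \<le> t * (t * N)"
    using bound[OF t(1,2)] by (simp add: power2_eq_square algebra_simps)
  then have "2 * I \<le> t * N"
    using t(1) by simp
  with t(3) \<open>\<not> I \<le> 0\<close> show False by simp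
qed

definition L2_convex :: "real measure \<Rightarrow> (real \<Rightarrow> real) set \<Rightarrow> bool" where
  "L2_convex M C \<longleftrightarrow> (\<forall>f\<in>C. L2 M f) \<and> (\<forall>f\<in>C. \<forall>g\<in>C. \<forall>t\<in>{0..1}. (\<lambda>x. (1 - t) * f x + t * g x) \<in> C)"

lemma L2_convexD:
  assumes "L2_convex M C"
  shows "f \<in> C \<Longrightarrow> L2 M f"
    and "f \<in> C \<Longrightarrow> g \<in> C \<Longrightarrow> 0 \<le> t \<Longrightarrow> t \<le> 1 \<Longrightarrow> (\<lambda>x. (1 - t) * f x + t * g x) \<in> C"
  using assms unfolding L2_convex_def by auto

lemma L2_projection_variational_ineq:
  assumes C: "L2_convex M C" and x: "L2 M x" and p: "p \<in> C" and z: "z \<in> C"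
    and min: "\<forall>c\<in>C. L2norm M (\<lambda>y. x y - p y) \<le> L2norm M (\<lambda>y. x y - c y)"
  shows "(\<integral>y. (x y - p y) * (z y - p y) \<partial>M) \<le> 0"
proof (rule nonpos_if_quadratic_bound)
  define a where "a = (\<lambda>y. x y - p y)"
  define d where "d = (\<lambda>y. z y - p y)"
  have La: "L2 M a" and Ld: "L2 M d"
    unfolding a_def d_def using L2_diff L2_convexD(1)[OF C] x p z by auto
  show "0 \<le> (\<integral>y. (z y - p y)\<^sup>2 \<partial>M)" by simp
  fix t :: real assume t: "0 < t" "t \<le> 1"
  have "(\<lambda>y. (1 - t) * p y + t * z y) \<in> C"
    using L2_convexD(2)[OF C p z] t by simp
  then have "L2norm M a \<le> L2norm M (\<lambda>y. a y - t * d y)"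
    using min unfolding a_def d_def by (force simp: algebra_simps)
  then have "(\<integral>y. (a y)\<^sup>2 \<partial>M) \<le> (\<integral>y. (a y - t * d y)\<^sup>2 \<partial>M)"
    unfolding L2norm_def by simp
  then show "2 * t * (\<integral>y. (x y - p y) * (z y - p y) \<partial>M) \<le> t\<^sup>2 * (\<integral>y. (z y - p y)\<^sup>2 \<partial>M)"
    unfolding integral_square_diff_scaled[OF La Ld] unfolding a_def d_def by simp
qed

lemma L2_projection_pythagoras:
  assumes C: "L2_convex M C" and x: "L2 M x" and p: "p \<in> C" and z: "z \<in> C"
    and min: "\<forall>c\<in>C. L2norm M (\<lambda>y. x y - p y) \<le> L2norm M (\<lambda>y. x y - c y)"
  shows "(\<integral>y. (p y - z y)\<^sup>2 \<partial>M) + (\<integral>y. (x y - p y)\<^sup>2 \<partial>M) \<le> (\<integral>y. (x y - z y)\<^sup>2 \<partial>M)"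
proof -
  have La: "L2 M (\<lambda>y. x y - p y)" and Ld: "L2 M (\<lambda>y. z y - p y)"
    using L2_diff L2_convexD(1)[OF C] x p z by auto
  have "(\<integral>y. (x y - z y)\<^sup>2 \<partial>M) = (\<integral>y. ((x y - p y) - 1 * (z y - p y))\<^sup>2 \<partial>M)"
    by simp
  also have "\<dots> = (\<integral>y. (x y - p y)\<^sup>2 \<partial>M) - 2 * (\<integral>y. (x y - p y) * (z y - p y) \<partial>M)
      + (\<integral>y. (p y - z y)\<^sup>2 \<partial>M)"
    unfolding integral_square_diff_scaled[OF La Ld] by (simp add: power2_commute)
  finally show ?thesis
    using L2_projection_variational_ineq[OF assms] by linarith
qed

lemma tendsto_zero_if_Lyapunov_decrease:
  fixes D E :: "nat \<Rightarrow> real"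
  assumes decrease: "\<And>k. D (Suc k) + E (Suc k) \<le> D k"
    and D_nonneg: "\<And>k. 0 \<le> D k" and E_nonneg: "\<And>k. 0 \<le> E k"
  shows "E \<longlonglongrightarrow> 0"
proof -
  have "D (Suc k) \<le> D k" for k
    using decrease[of k] E_nonneg[of "Suc k"] by linarith
  then have "decseq D"
    by (rule decseq_SucI)
  then obtain L where "D \<longlonglongrightarrow> L"
    using decseq_convergent[of D 0] D_nonneg by blast
  then have diff: "(\<lambda>k. D k - D (Suc k)) \<longlonglongrightarrow> 0"
    using tendsto_diff[OF _ LIMSEQ_Suc] by fastforce
  have "(\<lambda>k. E (Suc k)) \<longlonglongrightarrow> 0"
  proof (rule tendsto_sandwich[OF _ _ tendsto_const diff])
    show "\<forall>\<^sub>F k in sequentially. 0 \<le> E (Suc k)"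
      using E_nonneg by simp
    show "\<forall>\<^sub>F k in sequentially. E (Suc k) \<le> D k - D (Suc k)"
      using decrease by (simp add: algebra_simps)
  qed
  then show ?thesis
    by (rule LIMSEQ_imp_Suc)
qed

lemma alternating_projections_residual_tendsto_zero:
  assumes A: "L2_convex M A" and B: "L2_convex M B"
    and a: "a \<in> A" and c: "c \<in> B" and r: "\<And>x. x \<in> space M \<Longrightarrow> r x = a x + c x"
    and b0: "L2 M (b 0)"
    and u_min: "\<And>k. u (Suc k) \<in> A \<and>
        (\<forall>v\<in>A. L2norm M (\<lambda>x. r x - b k x - u (Suc k) x) \<le> L2norm M (\<lambda>x. r x - b k x - v x))"
    and b_min: "\<And>k. b (Suc k) \<in> B \<and>
        (\<forall>w\<in>B. L2norm M (\<lambda>x. r x - u (Suc k) x - b (Suc k) x) \<le> L2norm M (\<lambda>x. r x - u (Suc k) x - w x))"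
  shows "(\<lambda>k. L2norm M (\<lambda>x. (u k x + b k x) - r x)) \<longlonglongrightarrow> 0"
proof -
  define N where "N f = (\<integral>x. (f x)\<^sup>2 \<partial>M)" for f :: "real \<Rightarrow> real"
  have N_cong: "N f = N g" if "\<And>x. x \<in> space M \<Longrightarrow> f x = g x \<or> f x = - g x" for f g
    unfolding N_def
  proof (rule Bochner_Integration.integral_cong)
    fix x assume "x \<in> space M"
    then show "(f x)\<^sup>2 = (g x)\<^sup>2"
      using that by (metis power2_minus)
  qed simp
  have La: "L2 M a" and Lc: "L2 M c"
    using L2_convexD(1) A B a c by auto
  have Lr: "L2 M r"
    using L2_cong[OF _ L2_lincomb[OF La Lc, of 1 1]] r by simp
  have Lb: "L2 M (b k)" for k
    using b0 b_min L2_convexD(1)[OF B] by (cases k) auto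
  define D where "D k = N (\<lambda>x. b k x - c x)" for k
  define E where "E k = N (\<lambda>x. r x - u k x - b k x)" for k
  have "D (Suc k) + E (Suc k) \<le> D k" for k
  proof -
    have "N (\<lambda>y. u (Suc k) y - a y) + N (\<lambda>y. r y - b k y - u (Suc k) y) \<le> N (\<lambda>y. r y - b k y - a y)"
      unfolding N_def using u_min[of k]
      by (intro L2_projection_pythagoras[OF A L2_diff[OF Lr Lb] _ a]) auto
    moreover have "D (Suc k) + E (Suc k) \<le> N (\<lambda>y. r y - u (Suc k) y - c y)"
      unfolding N_def D_def E_def using b_min[of k] u_min[of k] L2_convexD(1)[OF A]
      by (intro L2_projection_pythagoras[OF B L2_diff[OF Lr] _ c]) auto
    moreover have "N (\<lambda>y. r y - b k y - a y) = D k"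
      and "N (\<lambda>y. r y - u (Suc k) y - c y) = N (\<lambda>y. u (Suc k) y - a y)"
      unfolding D_def by (auto intro!: N_cong simp: r)
    moreover have "0 \<le> N (\<lambda>y. r y - b k y - u (Suc k) y)"
      unfolding N_def by simp
    ultimately show ?thesis
      by linarith
  qed
  then have "E \<longlonglongrightarrow> 0"
    by (rule tendsto_zero_if_Lyapunov_decrease) (simp_all add: D_def E_def N_def)
  moreover have "L2norm M (\<lambda>x. (u k x + b k x) - r x) = sqrt (E k)" for k
    unfolding L2norm_def E_def N_def[symmetric] by (rule arg_cong[where f=sqrt], rule N_cong) simp
  ultimately show ?thesis
    using tendsto_real_sqrt by fastforce
qed

definition chain_variations :: "(real \<Rightarrow> real) \<Rightarrow> real \<Rightarrow> real \<Rightarrow> real set" where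
  "chain_variations f a x = {\<Sum>i<n. \<bar>f (t (Suc i)) - f (t i)\<bar> | (n::nat) (t::nat \<Rightarrow> real).
      (\<forall>i\<le>n. t i \<in> {a..x}) \<and> (\<forall>i<n. t i \<le> t (Suc i))}"

definition variation :: "(real \<Rightarrow> real) \<Rightarrow> real \<Rightarrow> real \<Rightarrow> real" where
  "variation f a x = Sup (chain_variations f a x)"

lemma bdd_above_chain_variations:
  assumes "bounded_variation_on f a b" "x \<le> b"
  shows "bdd_above (chain_variations f a x)"
proof -
  obtain B where B: "\<And>n t. (\<forall>i\<le>n. t i \<in> {a..b}) \<Longrightarrow> (\<forall>i<n. t i \<le> t (Suc i)) \<Longrightarrow>
      (\<Sum>i<n. \<bar>f (t (Suc i)) - f (t i)\<bar>) \<le> B"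
    using assms(1) unfolding bounded_variation_on_def by blast
  have "s \<le> B" if "s \<in> chain_variations f a x" for s
  proof -
    obtain n t where "\<forall>i\<le>n. t i \<in> {a..x}" "\<forall>i<n. t i \<le> t (Suc i)"
      and "s = (\<Sum>i<n. \<bar>f (t (Suc i)) - f (t i)\<bar>)"
      using \<open>s \<in> chain_variations f a x\<close> unfolding chain_variations_def by blast
    with assms(2) show "s \<le> B"
      using B[of n t] by force
  qed
  then show ?thesis
    by (rule bdd_aboveI)
qed

lemma variation_add_increment:
  assumes bv: "bounded_variation_on f a b" and xy: "a \<le> x" "x \<le> y" "y \<le> b"
  shows "variation f a x + \<bar>f y - f x\<bar> \<le> variation f a y"
proof -
  have "s \<le> variation f a y - \<bar>f y - f x\<bar>" if s_mem: "s \<in> chain_variations f a x" for s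
  proof -
    obtain n t where t: "\<forall>i\<le>n. t i \<in> {a..x}" "\<forall>i<n. t i \<le> t (Suc i)"
      and s: "s = (\<Sum>i<n. \<bar>f (t (Suc i)) - f (t i)\<bar>)"
      using s_mem unfolding chain_variations_def by blast
    define t' where "t' = t(Suc n := x, Suc (Suc n) := y)"
    have "\<forall>i\<le>Suc (Suc n). t' i \<in> {a..y}"
      using t(1) xy by (auto simp: t'_def le_Suc_eq)
    moreover have "t' i \<le> t' (Suc i)" if "i < Suc (Suc n)" for i
    proof -
      consider "i < n" | "i = n" | "i = Suc n"
        using \<open>i < Suc (Suc n)\<close> by linarith
      then show ?thesis
        using t xy by cases (auto simp: t'_def)
    qed
    ultimately
    have "(\<Sum>i<Suc (Suc n). \<bar>f (t' (Suc i)) - f (t' i)\<bar>) \<in> chain_variations f a y"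
      unfolding chain_variations_def by blast
    moreover have "(\<Sum>i<Suc (Suc n). \<bar>f (t' (Suc i)) - f (t' i)\<bar>) = s + \<bar>f x - f (t n)\<bar> + \<bar>f y - f x\<bar>"
      unfolding s t'_def by simp
    ultimately have "s + \<bar>f x - f (t n)\<bar> + \<bar>f y - f x\<bar> \<le> variation f a y"
      unfolding variation_def by (metis cSup_upper bdd_above_chain_variations[OF bv xy(3)])
    then show ?thesis
      by simp
  qed
  moreover have "0 \<in> chain_variations f a x"
    unfolding chain_variations_def using xy(1) by (intro CollectI exI[of _ 0] exI[of _ "\<lambda>_. x"]) simp
  ultimately have "variation f a x \<le> variation f a y - \<bar>f y - f x\<bar>"
    unfolding variation_def[of f a x] by (intro cSup_least) auto
  then show ?thesis
    by simp
qed

lemma bounded_variation_Jordan_decomposition: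
  assumes "bounded_variation_on f a b"
  shows "mono_on {a..b} (variation f a)" "mono_on {a..b} (\<lambda>x. variation f a x - f x)"
proof -
  have "variation f a x + \<bar>f y - f x\<bar> \<le> variation f a y"
    if "x \<in> {a..b}" "y \<in> {a..b}" "x \<le> y" for x y
    using variation_add_increment[OF assms, of x y] that by simp
  moreover have "0 \<le> \<bar>f y - f x\<bar>" "f y - f x \<le> \<bar>f y - f x\<bar>" for x y
    by simp_all
  ultimately show "mono_on {a..b} (variation f a)" "mono_on {a..b} (\<lambda>x. variation f a x - f x)"
    by (intro mono_onI, smt (verit))+
qed

lemma mono_on_in_Cplus:
  assumes "finite_measure M" "sets M = sets (restrict_space borel {0..1})" "mono_on {0..1} v"
  shows "v \<in> Cplus M"
  using L2_mono_on[OF assms] assms(3) unfolding Cplus_def by auto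

lemma L2_convex_Cplus: "L2_convex M (Cplus M)"
proof -
  have "(\<lambda>x. (1 - t) * f x + t * g x) \<in> Cplus M"
    if f: "f \<in> Cplus M" and g: "g \<in> Cplus M" and t: "0 \<le> t" "t \<le> 1" for f g t
  proof -
    obtain f' g' where "mono_on {0..1} f'" "AE x in M. f x = f' x"
      and "mono_on {0..1} g'" "AE x in M. g x = g' x"
      using f g unfolding Cplus_def by auto
    moreover have "mono_on {0..1} (\<lambda>x. (1 - t) * f' x + t * g' x)"
      using calculation t
      by (intro mono_onI add_mono mult_left_mono) (auto intro: mono_onD)
    moreover have "L2 M (\<lambda>x. (1 - t) * f x + t * g x)"
      using f g L2_lincomb unfolding Cplus_def by blast
    ultimately show ?thesis
      unfolding Cplus_def by (auto elim!: eventually_mono[OF eventually_conj])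
  qed
  then show ?thesis
    unfolding L2_convex_def Cplus_def by auto
qed

lemma L2_convex_Cminus: "L2_convex M (Cminus M)"
proof -
  have "(\<lambda>x. - ((1 - t) * f x + t * g x)) = (\<lambda>x. (1 - t) * - f x + t * - g x)"
    for f g :: "real \<Rightarrow> real" and t
    by simp
  then show ?thesis
    using L2_convex_Cplus[of M] L2_minus[of M "\<lambda>x. - f x" for f]
    unfolding L2_convex_def Cminus_def by fastforce
qed

theorem proposition3:
  fixes M :: "real measure" and r :: "real \<Rightarrow> real"
    and u b :: "nat \<Rightarrow> real \<Rightarrow> real"
  assumes prob: "prob_space M"
    and sets_M: "sets M = sets (restrict_space borel {0..1})"
    and nonatomic: "\<forall>x\<in>{0..1}. emeasure M {x} = 0"
    and rc: "\<forall>x\<in>{0..<1}. continuous (at_right x) r"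
    and bv: "bounded_variation_on r 0 1"
    and b0: "b 0 = (\<lambda>x. 0)"
    and u_min: "\<And>k. u (Suc k) \<in> Cplus M \<and>
        (\<forall>v\<in>Cplus M. L2norm M (\<lambda>x. r x - b k x - u (Suc k) x)
                       \<le> L2norm M (\<lambda>x. r x - b k x - v x))"
    and b_min: "\<And>k. b (Suc k) \<in> Cminus M \<and>
        (\<forall>w\<in>Cminus M. L2norm M (\<lambda>x. r x - u (Suc k) x - b (Suc k) x)
                        \<le> L2norm M (\<lambda>x. r x - u (Suc k) x - w x))"
  shows "(\<lambda>k. L2norm M (\<lambda>x. (u k x + b k x) - r x)) \<longlonglongrightarrow> 0"
proof -
  have fin: "finite_measure M"
    using prob by (simp add: prob_space_def)
  define v where "v = variation r 0"
  have "v \<in> Cplus M"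
    unfolding v_def
    using mono_on_in_Cplus[OF fin sets_M] bounded_variation_Jordan_decomposition(1)[OF bv] .
  moreover have "(\<lambda>x. r x - v x) \<in> Cminus M"
    unfolding Cminus_def v_def
    using mono_on_in_Cplus[OF fin sets_M] bounded_variation_Jordan_decomposition(2)[OF bv] by simp
  moreover have "L2 M (b 0)"
    unfolding b0 L2_def by simp
  ultimately show ?thesis
    by (intro alternating_projections_residual_tendsto_zero[where A="Cplus M" and B="Cminus M"
          and a=v and c="\<lambda>x. r x - v x"] L2_convex_Cplus L2_convex_Cminus u_min b_min)
      auto
qed

end
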